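(* Let $s>0$, $\nu>0$, $\Lambda>1$, $\varepsilon_c>0$ and $\varepsilon\in\mathbb{R}$ be real constants, and put $\lambda=1+1/s$. For $\Lambda'>0$ let $g_{\Lambda'}(\xi)=\xi^{3}+(1+s)\nu\xi^{2}-\Lambda'\xi-s\nu\Lambda'$, and let $\xi_{\Lambda}$ and $\xi_1$ denote the unique positive real roots of $g_{\Lambda}$ and $g_{1}$ respectively. Suppose $f:\mathbb{R}\to\mathbb{R}$ is three times differentiable on $(-\infty,0)$ and on $[0,\infty)$ with one-sided limits of $f,f',f''$ at $0$ from each side, and satisfies $$0=f(\chi)-(1+s)\nu f'(\chi)-\Lambda f''(\chi)+s\nu\Lambda f'''(\chi)\quad(\chi<0),$$ $$0=f(\chi)-\varepsilon-(1+s)\nu f'(\chi)-f''(\chi)+s\nu f'''(\chi)\quad(\chi\ge 0),$$ together with the conditions $$f(-0)-s\nu f'(-0)=f(+0)-s\nu f'(+0)=\frac{\Lambda\varepsilon-\varepsilon_c}{\Lambda-1},\quad f'(-0)=f'(+0),\quad f''(-0)=f''(+0),\quad \lim_{\chi\to-\infty}f(\chi)=0,\quad \lim_{\chi\to+\infty}f(\chi)=\varepsilon,$$ where $h(\pm0)$ denotes the one-sided limit of $h$ at $0$. Then $$\tilde{\varepsilon}\equiv\frac{\varepsilon}{\varepsilon_c}=\frac{\nu\left(1+s+\frac{s\Lambda}{\xi_1\xi_\Lambda}\right)+\xi_1+\xi_\Lambda}{\nu\left(1+s\Lambda+\frac{s\Lambda}{\xi_1\xi_\Lambda}\right)+\L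ambda\xi_1+\xi_\Lambda}=\frac{\frac{\nu}{\lambda-1}\left(\frac{\Lambda}{\xi_1\xi_\Lambda}+\lambda\right)+\xi_1+\xi_\Lambda}{\frac{\nu}{\lambda-1}\left(\Lambda+\frac{\Lambda}{\xi_1\xi_\Lambda}+\lambda-1\right)+\Lambda\xi_1+\xi_\Lambda}.$$
   Context: This is the steady-state (constant crack velocity) problem for a minimal viscoelastic crack model built from Zener elements: $f$ is the dashpot strain profile in the co-moving coordinate $\chi$ (crack tip at $\chi=0$), $\nu>0$ is the dimensionless crack velocity, $s=E_0/E_1$ is a ratio of spring moduli, $\Lambda=L/l$ is the ratio of sheet height to lattice spacing, $\varepsilon$ is the applied global strain and $\varepsilon_c$ the critical breaking strain. For $s,\nu,\Lambda'>0$ the cubic $g_{\Lambda'}$ has exactly one positive real root (and two negative ones). The paper also records the positive root $\xi_\Lambda$ explicitly via Cardano's formula. *)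

theory Defs
  imports Complex_Main
begin

definition gcub :: "real \<Rightarrow> real \<Rightarrow> real \<Rightarrow> real \<Rightarrow> real" where
  "gcub s \<nu> \<Lambda>' \<xi> = \<xi>^3 + (1 + s) * \<nu> * \<xi>^2 - \<Lambda>' * \<xi> - s * \<nu> * \<Lambda>'"

end

theory Submission
  imports Defs "HOL-Analysis.Analysis" "HOL-Real_Asymp.Real_Asymp"
begin

text \<open>
  If \<xi> > 0 is a root of gcub s \<nu> L, then the operator of s \<nu> L f''' - L f'' - (1 + s) \<nu> f' + f
  factors as s \<nu> L (D + 1/\<xi>) (D^2 - B D + C) with B, C > 0. Hence y = f'' - B f' + C (f - c) is a
  multiple of exp (- x / \<xi>), and once the matching multiple of exp (- x / \<xi>) is subtracted from
  f - c, the remainder solves u'' = B u' - C u, whose energy u'^2 + C u^2 is nondecreasing.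
  On the right half-line f \<longrightarrow> c therefore forces the remainder to vanish at 0, i.e. the data
  (f, f', f'') at 0+ lie on the decaying exponential; on the left half-line the remainder stays
  bounded, so f \<longrightarrow> c at -\<infinity> forces y = 0. With the matching conditions at the tip these are
  two linear equations for \<epsilon> and f(0) - \<epsilon>; eliminating f(0) - \<epsilon> with the help of the
  cubic equation for \<xi>L gives \<epsilon> / \<epsilon>c.
\<close>

lemma DERIV_nonneg_convex_imp_le:
  fixes g g' :: "real \<Rightarrow> real"
  assumes "convex S"
    and deriv: "\<And>z. z \<in> S \<Longrightarrow> (g has_real_derivative g' z) (at z within S)"
    and nonneg: "\<And>z. z \<in> S \<Longrightarrow> g' z \<ge> 0"
    and "x \<in> S" "y \<in> S" "x \<le> y"
  shows "g x \<le> g y"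
proof -
  have "is_interval S" using \<open>convex S\<close> by (simp add: is_interval_convex_1)
  then have sub: "{x..y} \<subseteq> S"
    using mem_is_interval_1_I[OF _ \<open>x \<in> S\<close> \<open>y \<in> S\<close>] by auto
  have "\<exists>z\<in>{x..y}. g y - g x = (*) (g' z) (y - x)"
  proof (rule mvt_very_simple[OF \<open>x \<le> y\<close>])
    fix z assume "x \<le> z" "z \<le> y"
    with sub have "(g has_real_derivative g' z) (at z within {x..y})"
      by (intro DERIV_subset[OF deriv]) auto
    then show "(g has_derivative (*) (g' z)) (at z within {x..y})"
      by (simp add: has_field_derivative_def)
  qed
  then obtain z where "z \<in> S" "g y - g x = g' z * (y - x)"
    using sub by auto
  with nonneg[of z] \<open>x \<le> y\<close> show ?thesis
    by (metis diff_ge_0_iff_ge mult_nonneg_nonneg)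
qed

lemma DERIV_eq_mult_imp_exp:
  fixes y :: "real \<Rightarrow> real"
  assumes "convex S" and deriv: "\<And>x. x \<in> S \<Longrightarrow> (y has_real_derivative a * y x) (at x within S)"
  shows "\<exists>k. \<forall>x\<in>S. y x = k * exp (a * x)"
proof -
  have "\<exists>k. \<forall>x\<in>S. y x * exp (- a * x) = k"
  proof (rule has_field_derivative_zero_constant[OF \<open>convex S\<close>])
    fix x assume "x \<in> S"
    then show "((\<lambda>x. y x * exp (- a * x)) has_real_derivative 0) (at x within S)"
      using deriv by (auto intro!: derivative_eq_intros simp: algebra_simps)
  qed
  then obtain k where "\<forall>x\<in>S. y x * exp (- a * x) = k" ..
  then have "\<forall>x\<in>S. y x = k * exp (a * x)"
    by (metis exp_minus_inverse minus_mult_left mult.assoc mult.commute mult_1)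
  then show ?thesis ..
qed

lemma DERIV_at_within_ge_imp_at_right_limit:
  fixes g :: "real \<Rightarrow> real"
  assumes "(g has_real_derivative D) (at x within {x..})" "(g \<longlongrightarrow> l) (at_right x)"
  shows "l = g x"
proof -
  have "(g \<longlongrightarrow> g x) (at x within {x..})"
    using DERIV_continuous[OF assms(1)] by (simp add: continuous_within)
  then have "(g \<longlongrightarrow> g x) (at_right x)" by (rule tendsto_within_subset) auto
  with assms(2) show ?thesis by (rule tendsto_unique[rotated]) simp
qed

lemma bounded_diff_exp_tendsto_at_bot_imp_zero:
  fixes g :: "real \<Rightarrow> real"
  assumes "a < 0" "(g \<longlongrightarrow> 0) at_bot"
    and bounded: "\<And>x. x \<le> X \<Longrightarrow> \<bar>g x - K * exp (a * x)\<bar> \<le> M"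
  shows "K = 0"
proof (rule ccontr)
  assume "K \<noteq> 0"
  have "filterlim (\<lambda>x. exp (a * x)) at_top at_bot" using \<open>a < 0\<close> by real_asymp
  then have "\<forall>\<^sub>F x in at_bot. (1 + M) / \<bar>K\<bar> < exp (a * x)" by (simp add: filterlim_at_top_dense)
  moreover have "\<forall>\<^sub>F x in at_bot. \<bar>g x\<bar> < 1"
    using tendstoD[OF assms(2), of 1] by simp
  moreover have "\<forall>\<^sub>F x in at_bot. x \<le> X" by simp
  ultimately have "\<forall>\<^sub>F x::real in at_bot. False"
  proof eventually_elim
    case (elim x)
    have "\<bar>K\<bar> * exp (a * x) = \<bar>g x - (g x - K * exp (a * x))\<bar>" by (simp add: abs_mult)
    also have "\<dots> < 1 + M" using elim bounded[of x] by linarith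
    finally show False using elim(1) \<open>K \<noteq> 0\<close> by (simp add: field_simps)
  qed
  then show False by simp
qed

lemma oscillator_energy_mono:
  fixes u u' u'' :: "real \<Rightarrow> real"
  assumes "B \<ge> 0" "convex S"
    and deriv: "\<And>x. x \<in> S \<Longrightarrow> (u has_real_derivative u' x) (at x within S) \<and>
                                 (u' has_real_derivative u'' x) (at x within S)"
    and ode: "\<And>x. x \<in> S \<Longrightarrow> u'' x = B * u' x - C * u x"
    and "x \<in> S" "y \<in> S" "x \<le> y"
  shows "(u' x)\<^sup>2 + C * (u x)\<^sup>2 \<le> (u' y)\<^sup>2 + C * (u y)\<^sup>2"
proof (rule DERIV_nonneg_convex_imp_le[OF \<open>convex S\<close> _ _ assms(5-7)])
  fix z assume z: "z \<in> S"
  have "((\<lambda>x. (u' x)\<^sup>2 + C * (u x)\<^sup>2) has_real_derivative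
          2 * u' z * u'' z + C * (2 * u z * u' z)) (at z within S)"
    using deriv[OF z] by (auto intro!: derivative_eq_intros)
  then show "((\<lambda>x. (u' x)\<^sup>2 + C * (u x)\<^sup>2) has_real_derivative 2 * B * (u' z)\<^sup>2) (at z within S)"
    by (simp add: ode[OF z] algebra_simps power2_eq_square)
  show "2 * B * (u' z)\<^sup>2 \<ge> 0" using \<open>B \<ge> 0\<close> by simp
qed

text \<open>
  If the energy E were positive at 0 it would stay \<ge> E 0 on [0, \<infinity>); but far out u is small,
  and by the mean value theorem so is u' at some point, making E small there.
\<close>
lemma oscillator_tendsto_zero_imp_zero_initial:
  fixes u u' u'' :: "real \<Rightarrow> real"
  assumes "B \<ge> 0" "C > 0"
    and deriv: "\<And>x. x \<ge> 0 \<Longrightarrow> (u has_real_derivative u' x) (at x within {0..}) \<and>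
                              (u' has_real_derivative u'' x) (at x within {0..})"
    and ode: "\<And>x. x \<ge> 0 \<Longrightarrow> u'' x = B * u' x - C * u x"
    and lim: "(u \<longlongrightarrow> 0) at_top"
  shows "u 0 = 0 \<and> u' 0 = 0"
proof (rule ccontr)
  define E where "E x = (u' x)\<^sup>2 + C * (u x)\<^sup>2" for x
  assume "\<not> (u 0 = 0 \<and> u' 0 = 0)"
  then have "E 0 > 0"
    using \<open>C > 0\<close> by (auto simp: E_def add_pos_nonneg add_nonneg_pos)
  have E_mono: "E 0 \<le> E x" if "x \<ge> 0" for x
    unfolding E_def using that deriv ode
    by (intro oscillator_energy_mono[OF \<open>B \<ge> 0\<close>, of "{0..}"]) auto
  define \<eta> where "\<eta> = sqrt (E 0 / (2 * (C + 4)))"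
  have "\<eta> > 0" using \<open>E 0 > 0\<close> \<open>C > 0\<close> by (simp add: \<eta>_def)
  have \<eta>_sq: "(C + 4) * \<eta>\<^sup>2 = E 0 / 2"
    using \<open>E 0 > 0\<close> \<open>C > 0\<close> by (simp add: \<eta>_def field_simps)
  have "\<forall>\<^sub>F x in at_top. \<bar>u x\<bar> < \<eta> \<and> x \<ge> 0"
    using tendstoD[OF lim \<open>\<eta> > 0\<close>] eventually_ge_at_top[of 0]
    by eventually_elim simp
  then obtain X where X: "\<And>x. x \<ge> X \<Longrightarrow> \<bar>u x\<bar> < \<eta> \<and> x \<ge> 0"
    by (auto simp: eventually_at_top_linorder)
  have "\<exists>z\<in>{X..X + 1}. u (X + 1) - u X = (*) (u' z) (X + 1 - X)"
  proof (rule mvt_very_simple)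
    fix z assume "X \<le> z" "z \<le> X + 1"
    then have "(u has_real_derivative u' z) (at z within {X..X + 1})"
      using X[of X] deriv[of z] by (auto intro: DERIV_subset)
    then show "(u has_derivative (*) (u' z)) (at z within {X..X + 1})"
      by (simp add: has_field_derivative_def)
  qed simp
  then obtain z where "X \<le> z" "u (X + 1) - u X = u' z" by auto
  then have "\<bar>u' z\<bar> \<le> \<bar>2 * \<eta>\<bar>" and "\<bar>u z\<bar> \<le> \<bar>\<eta>\<bar>"
    using X[of X] X[of "X + 1"] X[of z] by auto
  then have "E z \<le> (2 * \<eta>)\<^sup>2 + C * \<eta>\<^sup>2"
    unfolding E_def abs_le_square_iff using \<open>C > 0\<close> by (intro add_mono) auto
  also have "\<dots> < E 0" using \<eta>_sq \<open>E 0 > 0\<close> by (simp add: algebra_simps power_mult_distrib)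
  finally show False using E_mono[of z] X[of z] \<open>X \<le> z\<close> by simp
qed

lemma exp_shift_oscillator:
  fixes f f' f'' :: "real \<Rightarrow> real"
  assumes "(f has_real_derivative f' x) (at x within S)" "(f' has_real_derivative f'' x) (at x within S)"
    and "f'' x - B * f' x + C * (f x - c) = (a\<^sup>2 - B * a + C) * K * exp (a * x)"
  shows "((\<lambda>x. f x - c - K * exp (a * x)) has_real_derivative f' x - K * a * exp (a * x)) (at x within S)"
    and "((\<lambda>x. f' x - K * a * exp (a * x)) has_real_derivative f'' x - K * a\<^sup>2 * exp (a * x))
           (at x within S)"
    and "f'' x - K * a\<^sup>2 * exp (a * x)
           = B * (f' x - K * a * exp (a * x)) - C * (f x - c - K * exp (a * x))"
  using assms by (auto intro!: derivative_eq_intros simp: algebra_simps power2_eq_square)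

text \<open>
  Coefficientwise form of the factorization s \<nu> L (D + 1/\<xi>) (D^2 - B D + C) of the operator;
  it holds because -1/\<xi> is a characteristic root.
\<close>
lemma gcub_root_factorization:
  fixes s \<nu> L \<xi> :: real
  assumes "s * \<nu> \<noteq> 0" "L \<noteq> 0" "\<xi> \<noteq> 0" "gcub s \<nu> L \<xi> = 0"
  shows "s * \<nu> * L * ((F''' - (1 / (s * \<nu>) + 1 / \<xi>) * F'' + \<xi> / (s * \<nu> * L) * F')
           + (F'' - (1 / (s * \<nu>) + 1 / \<xi>) * F' + \<xi> / (s * \<nu> * L) * W) / \<xi>)
       = W - (1 + s) * \<nu> * F' - L * F'' + s * \<nu> * L * F'''"
proof -
  have root: "\<xi> - L / \<xi> - s * \<nu> * L / \<xi>\<^sup>2 = - (1 + s) * \<nu>"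
  proof -
    have "\<xi>\<^sup>2 * (\<xi> - L / \<xi> - s * \<nu> * L / \<xi>\<^sup>2) = \<xi> ^ 3 - L * \<xi> - s * \<nu> * L"
      using assms(3) by (simp add: field_simps power2_eq_square power3_eq_cube)
    also have "\<dots> = \<xi>\<^sup>2 * (- (1 + s) * \<nu>)"
      using assms(4) by (simp add: gcub_def algebra_simps)
    finally show ?thesis using assms(3) by simp
  qed
  have "s * \<nu> * L * ((F''' - (1 / (s * \<nu>) + 1 / \<xi>) * F'' + \<xi> / (s * \<nu> * L) * F')
           + (F'' - (1 / (s * \<nu>) + 1 / \<xi>) * F' + \<xi> / (s * \<nu> * L) * W) / \<xi>)
      = s * \<nu> * L * F''' - L * F'' + (\<xi> - L / \<xi> - s * \<nu> * L / \<xi>\<^sup>2) * F' + W"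
    using assms(1-3) by (simp add: field_simps power2_eq_square)
  then show ?thesis unfolding root by (simp add: algebra_simps)
qed

lemma cubic_ode_first_integral:
  fixes f f' f'' f''' :: "real \<Rightarrow> real"
  assumes "convex S" "s > 0" "\<nu> > 0" "L > 0" "\<xi> > 0" "gcub s \<nu> L \<xi> = 0"
    and deriv: "\<And>x. x \<in> S \<Longrightarrow> (f has_real_derivative f' x) (at x within S) \<and>
                  (f' has_real_derivative f'' x) (at x within S) \<and>
                  (f'' has_real_derivative f''' x) (at x within S)"
    and ode: "\<And>x. x \<in> S \<Longrightarrow> 0 = f x - c - (1 + s) * \<nu> * f' x - L * f'' x + s * \<nu> * L * f''' x"
  shows "\<exists>k. \<forall>x\<in>S. f'' x - (1 / (s * \<nu>) + 1 / \<xi>) * f' x + \<xi> / (s * \<nu> * L) * (f x - c)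
                   = k * exp (- x / \<xi>)"
proof -
  define B where "B = 1 / (s * \<nu>) + 1 / \<xi>"
  define C where "C = \<xi> / (s * \<nu> * L)"
  have "\<exists>k. \<forall>x\<in>S. f'' x - B * f' x + C * (f x - c) = k * exp (- 1 / \<xi> * x)"
  proof (rule DERIV_eq_mult_imp_exp[OF \<open>convex S\<close>])
    fix x assume x: "x \<in> S"
    have "s * \<nu> * L * ((f''' x - B * f'' x + C * f' x) + (f'' x - B * f' x + C * (f x - c)) / \<xi>) = 0"
      unfolding B_def C_def using assms(2-6) ode[OF x]
      by (subst gcub_root_factorization) auto
    then have "(f''' x - B * f'' x + C * f' x) + (f'' x - B * f' x + C * (f x - c)) / \<xi> = 0"
      using assms(2-4) by simp
    then have "f''' x - B * f'' x + C * f' x = - 1 / \<xi> * (f'' x - B * f' x + C * (f x - c))"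
      by (simp add: eq_neg_iff_add_eq_0)
    moreover have "((\<lambda>x. f'' x - B * f' x + C * (f x - c)) has_real_derivative
                     f''' x - B * f'' x + C * f' x) (at x within S)"
      using deriv[OF x] by (auto intro!: derivative_eq_intros)
    ultimately show "((\<lambda>x. f'' x - B * f' x + C * (f x - c)) has_real_derivative
                       - 1 / \<xi> * (f'' x - B * f' x + C * (f x - c))) (at x within S)"
      by simp
  qed
  then show ?thesis by (simp add: B_def C_def)
qed

lemma cubic_ode_at_right_limits_of_tendsto_at_top:
  fixes f f' f'' f''' :: "real \<Rightarrow> real"
  assumes "s > 0" "\<nu> > 0" "L > 0" "\<xi> > 0" "gcub s \<nu> L \<xi> = 0"
    and deriv: "\<And>x. x \<ge> 0 \<Longrightarrow> (f has_real_derivative f' x) (at x within {0..}) \<and>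
                  (f' has_real_derivative f'' x) (at x within {0..}) \<and>
                  (f'' has_real_derivative f''' x) (at x within {0..})"
    and ode: "\<And>x. x \<ge> 0 \<Longrightarrow> 0 = f x - c - (1 + s) * \<nu> * f' x - L * f'' x + s * \<nu> * L * f''' x"
    and lim: "(f \<longlongrightarrow> c) at_top"
    and lim0: "(f \<longlongrightarrow> F0) (at_right 0)" "(f' \<longlongrightarrow> F1) (at_right 0)" "(f'' \<longlongrightarrow> F2) (at_right 0)"
  shows "F1 = - (F0 - c) / \<xi> \<and> F2 = (F0 - c) / \<xi>\<^sup>2"
proof -
  define a B C where "a = - 1 / \<xi>" and "B = 1 / (s * \<nu>) + 1 / \<xi>" and "C = \<xi> / (s * \<nu> * L)"
  have "a < 0" "B > 0" "C > 0"
    using assms(1-4) by (simp_all add: a_def B_def C_def add_pos_pos)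
  define Q where "Q = a\<^sup>2 - B * a + C"
  have "B * a < 0" using \<open>B > 0\<close> \<open>a < 0\<close> by (rule mult_pos_neg)
  then have "Q > 0" using \<open>C > 0\<close> zero_le_power2[of a] unfolding Q_def by linarith
  have "\<exists>k. \<forall>x\<in>{0..}. f'' x - B * f' x + C * (f x - c) = k * exp (- x / \<xi>)"
    unfolding B_def C_def
    by (rule cubic_ode_first_integral[OF convex_real_interval(1) assms(1-5)]) (use deriv ode in auto)
  then obtain k where k: "\<And>x. x \<ge> 0 \<Longrightarrow> f'' x - B * f' x + C * (f x - c) = k * exp (a * x)"
    by (auto simp: a_def)
  define K where "K = k / Q"
  define u where "u x = f x - c - K * exp (a * x)" for x
  define u' where "u' x = f' x - K * a * exp (a * x)" for x
  define u'' where "u'' x = f'' x - K * a\<^sup>2 * exp (a * x)" for x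
  have first: "f'' x - B * f' x + C * (f x - c) = Q * K * exp (a * x)" if "x \<ge> 0" for x
    using k[OF that] \<open>Q > 0\<close> by (simp add: K_def)
  have osc_deriv: "(u has_real_derivative u' x) (at x within {0..}) \<and>
                   (u' has_real_derivative u'' x) (at x within {0..})"
    and osc_ode: "u'' x = B * u' x - C * u x" if "x \<ge> 0" for x
    using exp_shift_oscillator[where f = f and f' = f' and f'' = f'' and x = x and S = "{0..}"
        and B = B and C = C and c = c and a = a and K = K]
      deriv[OF that] first[OF that]
    unfolding u_def[abs_def] u'_def[abs_def] u''_def by (simp_all add: Q_def)
  have "((\<lambda>x. exp (a * x)) \<longlongrightarrow> 0) at_top" using \<open>a < 0\<close> by real_asymp
  from tendsto_diff[OF tendsto_diff[OF lim tendsto_const[of c]] tendsto_mult_left[OF this, of K]]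
  have "(u \<longlongrightarrow> 0) at_top" by (simp add: u_def[abs_def])
  with osc_deriv osc_ode \<open>B > 0\<close> \<open>C > 0\<close> have "u 0 = 0 \<and> u' 0 = 0"
    by (intro oscillator_tendsto_zero_imp_zero_initial[of B C]) auto
  then have "f 0 - c = K" "f' 0 = K * a" by (simp_all add: u_def u'_def)
  moreover have "f'' 0 = K * a\<^sup>2"
    using first[of 0] \<open>f 0 - c = K\<close> \<open>f' 0 = K * a\<close> by (simp add: Q_def algebra_simps)
  moreover have "F0 = f 0" "F1 = f' 0" "F2 = f'' 0"
    using deriv[of 0] lim0 by (auto intro: DERIV_at_within_ge_imp_at_right_limit)
  ultimately show ?thesis by (simp add: a_def power2_eq_square)
qed

lemma cubic_ode_at_left_limits_of_tendsto_at_bot: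
  fixes f f' f'' f''' :: "real \<Rightarrow> real"
  assumes "s > 0" "\<nu> > 0" "L > 0" "\<xi> > 0" "gcub s \<nu> L \<xi> = 0"
    and deriv: "\<And>x. x < 0 \<Longrightarrow> (f has_real_derivative f' x) (at x) \<and>
                  (f' has_real_derivative f'' x) (at x) \<and> (f'' has_real_derivative f''' x) (at x)"
    and ode: "\<And>x. x < 0 \<Longrightarrow> 0 = f x - c - (1 + s) * \<nu> * f' x - L * f'' x + s * \<nu> * L * f''' x"
    and lim: "(f \<longlongrightarrow> c) at_bot"
    and lim0: "(f \<longlongrightarrow> F0) (at_left 0)" "(f' \<longlongrightarrow> F1) (at_left 0)" "(f'' \<longlongrightarrow> F2) (at_left 0)"
  shows "F2 - (1 / (s * \<nu>) + 1 / \<xi>) * F1 + \<xi> / (s * \<nu> * L) * (F0 - c) = 0"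
proof -
  define a B C where "a = - 1 / \<xi>" and "B = 1 / (s * \<nu>) + 1 / \<xi>" and "C = \<xi> / (s * \<nu> * L)"
  have "a < 0" "B > 0" "C > 0"
    using assms(1-4) by (simp_all add: a_def B_def C_def add_pos_pos)
  define Q where "Q = a\<^sup>2 - B * a + C"
  have "B * a < 0" using \<open>B > 0\<close> \<open>a < 0\<close> by (rule mult_pos_neg)
  then have "Q > 0" using \<open>C > 0\<close> zero_le_power2[of a] unfolding Q_def by linarith
  have deriv': "(f has_real_derivative f' x) (at x within {..<0}) \<and>
                (f' has_real_derivative f'' x) (at x within {..<0}) \<and>
                (f'' has_real_derivative f''' x) (at x within {..<0})" if "x \<in> {..<0}" for x
    using deriv[of x] that by (auto intro: has_field_derivative_at_within)
  have "\<exists>k. \<forall>x\<in>{..<0}. f'' x - B * f' x + C * (f x - c) = k * exp (- x / \<xi>)"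
    unfolding B_def C_def
    by (rule cubic_ode_first_integral[OF convex_real_interval(4) assms(1-5) deriv']) (use ode in auto)
  then obtain k where k: "\<And>x. x < 0 \<Longrightarrow> f'' x - B * f' x + C * (f x - c) = k * exp (a * x)"
    by (auto simp: a_def)
  define K where "K = k / Q"
  define u where "u x = f x - c - K * exp (a * x)" for x
  define u' where "u' x = f' x - K * a * exp (a * x)" for x
  define u'' where "u'' x = f'' x - K * a\<^sup>2 * exp (a * x)" for x
  have osc_deriv: "(u has_real_derivative u' x) (at x within {..<0}) \<and>
                   (u' has_real_derivative u'' x) (at x within {..<0})"
    and osc_ode: "u'' x = B * u' x - C * u x" if "x \<in> {..<0}" for x
    using exp_shift_oscillator[where f = f and f' = f' and f'' = f'' and x = x and S = "{..<0}"
        and B = B and C = C and c = c and a = a and K = K]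
      deriv'[OF that] k[of x] that \<open>Q > 0\<close>
    unfolding u_def[abs_def] u'_def[abs_def] u''_def by (simp_all add: K_def Q_def)
  have "\<bar>(f y - c) - K * exp (a * y)\<bar> \<le> sqrt ((u' (-1))\<^sup>2 / C + (u (-1))\<^sup>2)" if "y \<le> -1" for y
  proof -
    have "C * (u y)\<^sup>2 \<le> (u' y)\<^sup>2 + C * (u y)\<^sup>2" by simp
    also have "\<dots> \<le> (u' (-1))\<^sup>2 + C * (u (-1))\<^sup>2"
      by (rule oscillator_energy_mono[OF less_imp_le[OF \<open>B > 0\<close>] convex_real_interval(4) osc_deriv osc_ode])
        (use that in auto)
    finally have "\<bar>u y\<bar>\<^sup>2 \<le> (u' (-1))\<^sup>2 / C + (u (-1))\<^sup>2"
      using \<open>C > 0\<close> by (simp add: field_simps)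
    then show ?thesis unfolding u_def by (rule real_le_rsqrt)
  qed
  moreover have "((\<lambda>x. f x - c) \<longlongrightarrow> 0) at_bot" using lim by (simp add: LIM_zero)
  ultimately have "K = 0" by (intro bounded_diff_exp_tendsto_at_bot_imp_zero[OF \<open>a < 0\<close>]) auto
  then have vanish: "\<forall>\<^sub>F x in at_left 0. f'' x - B * f' x + C * (f x - c) = 0"
    using k \<open>Q > 0\<close> by (auto simp: K_def eventually_at_filter)
  have "((\<lambda>x. f'' x - B * f' x + C * (f x - c)) \<longlongrightarrow> F2 - B * F1 + C * (F0 - c)) (at_left 0)"
    using lim0 by (intro tendsto_intros)
  from tendsto_unique[OF trivial_limit_at_left_real this tendsto_eventually[OF vanish]]
  show ?thesis by (simp add: B_def C_def)
qed

lemma strain_ratio_of_matching: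
  fixes s \<nu> \<Lambda> \<epsilon>c \<epsilon> \<xi>1 \<xi>L F0 F1 F2 :: real
  assumes "s > 0" "\<nu> > 0" "\<Lambda> > 1" "\<epsilon>c > 0" "\<xi>1 > 0" "\<xi>L > 0" "gcub s \<nu> \<Lambda> \<xi>L = 0"
    and left: "F2 - (1 / (s * \<nu>) + 1 / \<xi>L) * F1 + \<xi>L / (s * \<nu> * \<Lambda>) * F0 = 0"
    and right: "F1 = - (F0 - \<epsilon>) / \<xi>1" "F2 = (F0 - \<epsilon>) / \<xi>1\<^sup>2"
    and jump: "F0 - s * \<nu> * F1 = (\<Lambda> * \<epsilon> - \<epsilon>c) / (\<Lambda> - 1)"
  shows "\<epsilon> / \<epsilon>c = (\<nu> * (1 + s + s * \<Lambda> / (\<xi>1 * \<xi>L)) + \<xi>1 + \<xi>L) /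
                  (\<nu> * (1 + s * \<Lambda> + s * \<Lambda> / (\<xi>1 * \<xi>L)) + \<Lambda> * \<xi>1 + \<xi>L)"
proof -
  define d where "d = F0 - \<epsilon>"
  have F: "F0 = \<epsilon> + d" "F1 = - d / \<xi>1" "F2 = d / \<xi>1\<^sup>2" by (simp_all add: d_def right)
  define N where "N = \<nu> * (1 + s + s * \<Lambda> / (\<xi>1 * \<xi>L)) + \<xi>1 + \<xi>L"
  define D where "D = \<nu> * (1 + s * \<Lambda> + s * \<Lambda> / (\<xi>1 * \<xi>L)) + \<Lambda> * \<xi>1 + \<xi>L"
  have "D > 0" unfolding D_def using assms(1-3,5,6) by (intro add_pos_pos mult_pos_pos) auto
  have D_eq: "D = N + (\<Lambda> - 1) * (s * \<nu> + \<xi>1)" by (simp add: N_def D_def algebra_simps)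
  have "0 = s * \<nu> * \<Lambda> * \<xi>1\<^sup>2 * \<xi>L *
            (F2 - (1 / (s * \<nu>) + 1 / \<xi>L) * F1 + \<xi>L / (s * \<nu> * \<Lambda>) * F0)"
    by (simp only: left mult_zero_right)
  also have "\<dots> = d * (s * \<nu> * \<Lambda> * \<xi>L + \<xi>1 * (\<Lambda> * \<xi>L + s * \<nu> * \<Lambda>) + \<xi>1\<^sup>2 * \<xi>L\<^sup>2)
                  + \<epsilon> * \<xi>1\<^sup>2 * \<xi>L\<^sup>2"
    using assms(1-3,5,6) unfolding F by (simp add: field_simps power2_eq_square)
  also have "\<Lambda> * \<xi>L + s * \<nu> * \<Lambda> = \<xi>L ^ 3 + (1 + s) * \<nu> * \<xi>L\<^sup>2"
    using assms(7) by (simp add: gcub_def algebra_simps)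
  also have "s * \<nu> * \<Lambda> * \<xi>L + \<xi>1 * (\<xi>L ^ 3 + (1 + s) * \<nu> * \<xi>L\<^sup>2) + \<xi>1\<^sup>2 * \<xi>L\<^sup>2
             = \<xi>1 * \<xi>L\<^sup>2 * N"
    using assms(5,6) by (simp add: N_def field_simps power2_eq_square power3_eq_cube)
  finally have "\<xi>1 * \<xi>L\<^sup>2 * (d * N + \<epsilon> * \<xi>1) = 0" by (simp add: algebra_simps power2_eq_square)
  then have dN: "d * N = - \<epsilon> * \<xi>1" using assms(5,6) by simp
  have "(\<Lambda> - 1) * (\<epsilon> * \<xi>1 + d * (\<xi>1 + s * \<nu>)) = (\<Lambda> * \<epsilon> - \<epsilon>c) * \<xi>1"
    using jump assms(3,5) unfolding F by (simp add: field_simps)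
  then have "\<xi>1 * (\<epsilon>c * N) = \<xi>1 * (\<epsilon> * D)" using dN D_eq by algebra
  then have "\<epsilon>c * N = \<epsilon> * D" using assms(5) by simp
  then show ?thesis using \<open>D > 0\<close> \<open>\<epsilon>c > 0\<close>
    unfolding N_def[symmetric] D_def[symmetric] by (simp add: field_simps)
qed

theorem theorem1:
  fixes s \<nu> \<Lambda> \<epsilon>c \<epsilon> lam \<xi>L \<xi>1 :: real
    and f f1 f2 f3 :: "real \<Rightarrow> real"
    and fm fp f1m f1p f2m f2p :: real
  assumes hs: "s > 0" and h\<nu>: "\<nu> > 0" and h\<Lambda>: "\<Lambda> > 1" and hc: "\<epsilon>c > 0"
    and hlam: "lam = 1 + 1 / s"
    and h\<xi>L: "\<xi>L > 0" "gcub s \<nu> \<Lambda> \<xi>L = 0"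
    and h\<xi>1: "\<xi>1 > 0" "gcub s \<nu> 1 \<xi>1 = 0"
    and dneg: "\<And>x. x < 0 \<Longrightarrow> (f has_real_derivative f1 x) (at x) \<and>
                   (f1 has_real_derivative f2 x) (at x) \<and> (f2 has_real_derivative f3 x) (at x)"
    and dpos: "\<And>x. x \<ge> 0 \<Longrightarrow> (f has_real_derivative f1 x) (at x within {0..}) \<and>
                   (f1 has_real_derivative f2 x) (at x within {0..}) \<and>
                   (f2 has_real_derivative f3 x) (at x within {0..})"
    and lim_fm: "(f \<longlongrightarrow> fm) (at_left 0)" and lim_fp: "(f \<longlongrightarrow> fp) (at_right 0)"
    and lim_f1m: "(f1 \<longlongrightarrow> f1m) (at_left 0)" and lim_f1p: "(f1 \<longlongrightarrow> f1p) (at_right 0)"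
    and lim_f2m: "(f2 \<longlongrightarrow> f2m) (at_left 0)" and lim_f2p: "(f2 \<longlongrightarrow> f2p) (at_right 0)"
    and ode_neg: "\<And>x. x < 0 \<Longrightarrow>
        0 = f x - (1 + s) * \<nu> * f1 x - \<Lambda> * f2 x + s * \<nu> * \<Lambda> * f3 x"
    and ode_pos: "\<And>x. x \<ge> 0 \<Longrightarrow>
        0 = f x - \<epsilon> - (1 + s) * \<nu> * f1 x - f2 x + s * \<nu> * f3 x"
    and bc1: "fm - s * \<nu> * f1m = (\<Lambda> * \<epsilon> - \<epsilon>c) / (\<Lambda> - 1)"
    and bc2: "fp - s * \<nu> * f1p = (\<Lambda> * \<epsilon> - \<epsilon>c) / (\<Lambda> - 1)"
    and bc3: "f1m = f1p" and bc4: "f2m = f2p"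
    and inf_neg: "(f \<longlongrightarrow> 0) at_bot" and inf_pos: "(f \<longlongrightarrow> \<epsilon>) at_top"
  shows "\<epsilon> / \<epsilon>c =
           (\<nu> * (1 + s + s * \<Lambda> / (\<xi>1 * \<xi>L)) + \<xi>1 + \<xi>L) /
           (\<nu> * (1 + s * \<Lambda> + s * \<Lambda> / (\<xi>1 * \<xi>L)) + \<Lambda> * \<xi>1 + \<xi>L)
       \<and> (\<nu> * (1 + s + s * \<Lambda> / (\<xi>1 * \<xi>L)) + \<xi>1 + \<xi>L) /
           (\<nu> * (1 + s * \<Lambda> + s * \<Lambda> / (\<xi>1 * \<xi>L)) + \<Lambda> * \<xi>1 + \<xi>L)
         = (\<nu> / (lam - 1) * (\<Lambda> / (\<xi>1 * \<xi>L) + lam) + \<xi>1 + \<xi>L) /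
           (\<nu> / (lam - 1) * (\<Lambda> + \<Lambda> / (\<xi>1 * \<xi>L) + lam - 1) + \<Lambda> * \<xi>1 + \<xi>L)"
proof -
  have right: "f1p = - (fp - \<epsilon>) / \<xi>1 \<and> f2p = (fp - \<epsilon>) / \<xi>1\<^sup>2"
    using cubic_ode_at_right_limits_of_tendsto_at_top[OF hs h\<nu> zero_less_one h\<xi>1 dpos _ inf_pos
        lim_fp lim_f1p lim_f2p] ode_pos
    by simp
  have left: "f2m - (1 / (s * \<nu>) + 1 / \<xi>L) * f1m + \<xi>L / (s * \<nu> * \<Lambda>) * fm = 0"
    using cubic_ode_at_left_limits_of_tendsto_at_bot[OF hs h\<nu> _ h\<xi>L dneg _ inf_neg
        lim_fm lim_f1m lim_f2m] ode_neg h\<Lambda>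
    by simp
  have "fm = fp" using bc1 bc2 bc3 by simp
  with left right bc2 bc3 bc4
  have ratio: "\<epsilon> / \<epsilon>c = (\<nu> * (1 + s + s * \<Lambda> / (\<xi>1 * \<xi>L)) + \<xi>1 + \<xi>L) /
                  (\<nu> * (1 + s * \<Lambda> + s * \<Lambda> / (\<xi>1 * \<xi>L)) + \<Lambda> * \<xi>1 + \<xi>L)"
    by (intro strain_ratio_of_matching[OF hs h\<nu> h\<Lambda> hc h\<xi>1(1) h\<xi>L, of f2p f1p fp]) simp_all
  have "\<nu> / (lam - 1) = s * \<nu>" using hs by (simp add: hlam)
  then have "\<nu> / (lam - 1) * (\<Lambda> / (\<xi>1 * \<xi>L) + lam) = \<nu> * (1 + s + s * \<Lambda> / (\<xi>1 * \<xi>L))"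
    and "\<nu> / (lam - 1) * (\<Lambda> + \<Lambda> / (\<xi>1 * \<xi>L) + lam - 1) = \<nu> * (1 + s * \<Lambda> + s * \<Lambda> / (\<xi>1 * \<xi>L))"
    using hs by (simp_all add: hlam field_simps)
  with ratio show ?thesis by simp
qed

end
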